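(* $\overline{\mathcal M}_2=\mathcal M_2$; that is, every matroid with a real representation as a $2$-modular matrix also has a real representation as a totally $2$-modular matrix.
   Context: An integer matrix $A$ is $\Delta$-modular if the determinant of every $\operatorname{rank}(A)\times\operatorname{rank}(A)$ submatrix has absolute value at most $\Delta$, and totally $\Delta$-modular if the determinant of every square submatrix has absolute value at most $\Delta$. $\mathcal M_\Delta$ (resp. $\overline{\mathcal M}_\Delta$) is the class of matroids isomorphic to the real vector matroid of the columns of some $\Delta$-modular (resp. totally $\Delta$-modular) matrix. *)

theory Defs
  imports "Jordan_Normal_Form.Determinant" "Jordan_Normal_Form.DL_Submatrix"
begin

definition cols_indep_real :: "int mat \<Rightarrow> nat set \<Rightarrow> bool" where
  "cols_indep_real A S \<longleftrightarrow> S \<subseteq> {..<dim_col A} \<and>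
     (\<forall>c :: nat \<Rightarrow> real.
        (\<forall>i<dim_row A. (\<Sum>j\<in>S. c j * real_of_int (A $$ (i, j))) = 0) \<longrightarrow>
        (\<forall>j\<in>S. c j = 0))"

definition real_rank :: "int mat \<Rightarrow> nat" where
  "real_rank A = Max (card ` {S. cols_indep_real A S})"

definition square_subsets :: "int mat \<Rightarrow> nat \<Rightarrow> (nat set \<times> nat set) set" where
  "square_subsets A k = {(I, J). I \<subseteq> {..<dim_row A} \<and> J \<subseteq> {..<dim_col A}
                                  \<and> card I = k \<and> card J = k}"

definition Delta_modular :: "int \<Rightarrow> int mat \<Rightarrow> bool" where
  "Delta_modular \<Delta> A \<longleftrightarrow>
     (\<forall>(I, J) \<in> square_subsets A (real_rank A). \<bar>det (submatrix A I J)\<bar> \<le> \<Delta>)"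

definition totally_Delta_modular :: "int \<Rightarrow> int mat \<Rightarrow> bool" where
  "totally_Delta_modular \<Delta> A \<longleftrightarrow>
     (\<forall>k. \<forall>(I, J) \<in> square_subsets A k. \<bar>det (submatrix A I J)\<bar> \<le> \<Delta>)"

definition iso_vector_matroid :: "'a set \<Rightarrow> ('a set \<Rightarrow> bool) \<Rightarrow> int mat \<Rightarrow> bool" where
  "iso_vector_matroid E indep A \<longleftrightarrow>
     (\<exists>f. bij_betw f E {..<dim_col A} \<and>
          (\<forall>X \<subseteq> E. indep X \<longleftrightarrow> cols_indep_real A (f ` X)))"

definition in_M :: "int \<Rightarrow> 'a set \<Rightarrow> ('a set \<Rightarrow> bool) \<Rightarrow> bool" where
  "in_M \<Delta> E indep \<longleftrightarrow> (\<exists>A. Delta_modular \<Delta> A \<and> iso_vector_matroid E indep A)"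

definition in_Mbar :: "int \<Rightarrow> 'a set \<Rightarrow> ('a set \<Rightarrow> bool) \<Rightarrow> bool" where
  "in_Mbar \<Delta> E indep \<longleftrightarrow> (\<exists>A. totally_Delta_modular \<Delta> A \<and> iso_vector_matroid E indep A)"

end

theory Submission
  imports Defs
begin

text \<open>Let \<open>A\<close> be \<open>2\<close>-modular of rank \<open>r\<close> and choose a nonsingular \<open>r \<times> r\<close> submatrix
  \<open>B = A[I, J]\<close> whose determinant has the least possible nonzero absolute value. Express every
  column of \<open>A\<close> in the basis given by the columns \<open>J\<close>; the resulting \<open>r \<times> n\<close> coordinate
  matrix \<open>D\<close> has the same column matroid as \<open>A\<close>, contains an identity matrix in the columns
  \<open>J\<close>, and satisfies \<open>det D[-, X] = det A[I, X] / det B\<close>. By minimality of \<open>\<bar>det B\<bar>\<close> and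
  \<open>2\<close>-modularity these quotients are integers of absolute value at most \<open>2\<close>. Completing any
  square submatrix of \<open>D\<close> with unit columns shows that it either has a zero column or has, up to
  sign, the determinant of a maximal one; so \<open>D\<close> is integral and totally \<open>2\<close>-modular.\<close>

text \<open>Rows and columns are given by index maps rather than index sets, so that they can be
  reordered and concatenated; \<open>pick\<close> enumerates a set increasingly.\<close>
definition minor_mat :: "(nat \<Rightarrow> nat \<Rightarrow> 'a) \<Rightarrow> (nat \<Rightarrow> nat) \<Rightarrow> (nat \<Rightarrow> nat) \<Rightarrow> nat \<Rightarrow> 'a mat" where
  "minor_mat F f g k = mat k k (\<lambda>(i, j). F (f i) (g j))"

lemma minor_mat_carrier [simp]: "minor_mat F f g k \<in> carrier_mat k k"
  and dim_row_minor_mat [simp]: "dim_row (minor_mat F f g k) = k"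
  and dim_col_minor_mat [simp]: "dim_col (minor_mat F f g k) = k"
  by (auto simp: minor_mat_def)

lemma minor_mat_index [simp]: "i < k \<Longrightarrow> j < k \<Longrightarrow> minor_mat F f g k $$ (i, j) = F (f i) (g j)"
  by (simp add: minor_mat_def)

lemma minor_mat_cong:
  "(\<And>i j. i < k \<Longrightarrow> j < k \<Longrightarrow> F (f i) (g j) = F' (f' i) (g' j)) \<Longrightarrow>
    minor_mat F f g k = minor_mat F' f' g' k"
  by (rule eq_matI) auto

lemma transpose_minor_mat: "transpose_mat (minor_mat F f g k) = minor_mat (\<lambda>a b. F b a) g f k"
  by (rule eq_matI) auto

lemma map_mat_minor_mat: "map_mat h (minor_mat F f g k) = minor_mat (\<lambda>i j. h (F i j)) f g k"
  by (rule eq_matI) auto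

lemma submatrix_eq_minor_mat:
  assumes "I \<subseteq> {..<dim_row A}" "J \<subseteq> {..<dim_col A}" "card I = k" "card J = k"
  shows "submatrix A I J = minor_mat (\<lambda>i j. A $$ (i, j)) (pick I) (pick J) k"
proof -
  have "{i. i < dim_row A \<and> i \<in> I} = I" "{j. j < dim_col A \<and> j \<in> J} = J"
    using assms by auto
  thus ?thesis unfolding submatrix_def minor_mat_def using assms by simp
qed

lemma det_minor_mat_nonzero_iff:
  fixes M :: "nat \<Rightarrow> nat \<Rightarrow> 'a::field"
  shows "det (minor_mat M f g r) \<noteq> 0 \<longleftrightarrow>
    (\<forall>x. (\<forall>i<r. (\<Sum>j<r. M (f i) (g j) * x j) = 0) \<longrightarrow> (\<forall>j<r. x j = 0))"
    (is "_ \<longleftrightarrow> ?kernel_trivial")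
proof -
  have mult_vec: "minor_mat M f g r *\<^sub>v vec r x = vec r (\<lambda>i. \<Sum>j<r. M (f i) (g j) * x j)" for x
    by (rule eq_vecI) (simp_all add: scalar_prod_def atLeast0LessThan)
  have zero: "vec r h = 0\<^sub>v r \<longleftrightarrow> (\<forall>i<r. h i = 0)" for h :: "nat \<Rightarrow> 'a"
    by (simp add: vec_eq_iff)
  have all_vec: "(\<forall>v \<in> carrier_vec r. P v) \<longleftrightarrow> (\<forall>x. P (vec r x))" for P :: "'a vec \<Rightarrow> bool"
  proof (intro iffI allI ballI)
    fix v :: "'a vec" assume "\<forall>x. P (vec r x)" and "v \<in> carrier_vec r"
    moreover have "vec r (\<lambda>i. v $ i) = v" if "v \<in> carrier_vec r"
      using that by (simp add: vec_eq_iff)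
    ultimately show "P v"
      by metis
  qed simp
  have "det (minor_mat M f g r) \<noteq> 0 \<longleftrightarrow>
      (\<forall>v \<in> carrier_vec r. minor_mat M f g r *\<^sub>v v = 0\<^sub>v r \<longrightarrow> v = 0\<^sub>v r)"
    using det_0_iff_vec_prod_zero_field[OF minor_mat_carrier] by blast
  also have "\<dots> \<longleftrightarrow> ?kernel_trivial"
    unfolding all_vec mult_vec zero by simp
  finally show ?thesis .
qed

lemma exists_nonzero_solution_wide:
  fixes X :: "nat \<Rightarrow> nat \<Rightarrow> 'a::field"
  assumes "r < s"
  shows "\<exists>y. (\<exists>j<s. y j \<noteq> 0) \<and> (\<forall>i<r. (\<Sum>j<s. X i j * y j) = 0)"
proof -
  define X' where "X' i j = (if i < r then X i j else 0)" for i j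
  have "det (minor_mat X' id id s) = 0"
  proof -
    have "(\<Prod>i\<in>{0..<s}. minor_mat X' id id s $$ (i, p i)) = 0" if p: "p permutes {0..<s}" for p
    proof (rule prod_zero)
      have "p r < s"
        using p assms by (meson atLeastLessThan_iff le0 permutes_in_image)
      thus "\<exists>a\<in>{0..<s}. minor_mat X' id id s $$ (a, p a) = 0"
        using assms by (intro bexI[of _ r]) (auto simp: X'_def)
    qed simp
    thus ?thesis
      unfolding det_def'[OF minor_mat_carrier] by (intro sum.neutral) auto
  qed
  then obtain y where y: "\<forall>i<s. (\<Sum>j<s. X' i j * y j) = 0" "\<exists>j<s. y j \<noteq> 0"
    using det_minor_mat_nonzero_iff[of X' id id s] by auto
  have "(\<Sum>j<s. X i j * y j) = (\<Sum>j<s. X' i j * y j)" if "i < r" for i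
    using that by (simp add: X'_def)
  hence "\<forall>i<r. (\<Sum>j<s. X i j * y j) = 0"
    using y(1) assms by simp
  thus ?thesis
    using y(2) by blast
qed

lemma bij_betw_pick:
  assumes "finite S" "card S = k"
  shows "bij_betw (pick S) {..<k} S"
  unfolding bij_betw_def
proof
  show "inj_on (pick S) {..<k}"
    using assms by (intro strict_mono_on_imp_inj_on strict_mono_onI pick_mono) auto
  show "pick S ` {..<k} = S"
  proof
    show "pick S ` {..<k} \<subseteq> S"
      using assms pick_in_set by auto
    show "S \<subseteq> pick S ` {..<k}"
    proof
      fix i assume i: "i \<in> S"
      have "{a\<in>S. a < i} \<subset> S"
        using i by auto
      hence "card {a\<in>S. a < i} < card S"
        by (rule psubset_card_mono[OF assms(1)])
      hence "card {a\<in>S. a < i} \<in> {..<k}"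
        using assms(2) by simp
      moreover have "i = pick S (card {a\<in>S. a < i})"
        by (rule pick_card_in_set[OF i, symmetric])
      ultimately show "i \<in> pick S ` {..<k}"
        by (rule rev_image_eqI)
    qed
  qed
qed

lemma pick_in_subset: "card S = k \<Longrightarrow> a < k \<Longrightarrow> pick S a \<in> S"
  using pick_in_set by blast

lemma sum_pick: "finite J \<Longrightarrow> card J = r \<Longrightarrow> (\<Sum>j\<in>J. h j) = (\<Sum>b<r. h (pick J b))"
  using sum.reindex_bij_betw[OF bij_betw_pick, of J r h] by simp

lemma enumerations_differ_by_permutation:
  fixes k :: nat
  assumes f: "bij_betw f {..<k} I" and h: "bij_betw h {..<k} I"
  obtains p where "p permutes {0..<k}" "\<And>i. i < k \<Longrightarrow> f i = h (p i)"
proof -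
  define p where "p i = (if i < k then inv_into {..<k} h (f i) else i)" for i
  have "bij_betw (inv_into {..<k} h \<circ> f) {..<k} {..<k}"
    using bij_betw_trans[OF f bij_betw_inv_into[OF h]] .
  hence "bij_betw p {..<k} {..<k}"
    by (rule bij_betw_cong[THEN iffD1, rotated]) (auto simp: p_def)
  hence "p permutes {..<k}"
    by (rule bij_imp_permutes) (auto simp: p_def)
  moreover have "f i = h (p i)" if "i < k" for i
    using that f h by (auto simp: p_def bij_betw_def intro!: f_inv_into_f[symmetric])
  moreover have "{..<k} = {0..<k}"
    by auto
  ultimately show thesis
    using that by metis
qed

lemma det_minor_mat_permute_rows:
  assumes "p permutes {0..<k}"
  shows "det (minor_mat F (h \<circ> p) g k) = signof p * det (minor_mat F h g k)"
proof -
  have "minor_mat F (h \<circ> p) g k = mat k k (\<lambda>(i, j). minor_mat F h g k $$ (p i, j))"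
    using assms by (intro eq_matI) (auto dest: permutes_in_image)
  thus ?thesis
    using det_permute_rows[OF minor_mat_carrier assms] by simp
qed

lemma det_minor_mat_permute_cols:
  assumes "p permutes {0..<k}"
  shows "det (minor_mat F f (h \<circ> p) k) = signof p * det (minor_mat F f h k)"
proof -
  have flip: "det (minor_mat F f g' k) = det (minor_mat (\<lambda>a b. F b a) g' f k)" for g'
    using det_transpose[OF minor_mat_carrier, of F f g' k] by (simp add: transpose_minor_mat)
  show ?thesis
    using flip[of "h \<circ> p"] flip[of h] det_minor_mat_permute_rows[OF assms, of "\<lambda>a b. F b a" h f]
    by simp
qed

lemma abs_det_minor_mat_reindex:
  fixes F :: "nat \<Rightarrow> nat \<Rightarrow> 'a::linordered_idom"
  assumes "bij_betw f {..<k} I" "bij_betw f' {..<k} I" "bij_betw g {..<k} J" "bij_betw g' {..<k} J"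
  shows "\<bar>det (minor_mat F f g k)\<bar> = \<bar>det (minor_mat F f' g' k)\<bar>"
proof -
  obtain p where p: "p permutes {0..<k}" "\<And>i. i < k \<Longrightarrow> f i = f' (p i)"
    using enumerations_differ_by_permutation[OF assms(1,2)] by blast
  obtain q where q: "q permutes {0..<k}" "\<And>i. i < k \<Longrightarrow> g i = g' (q i)"
    using enumerations_differ_by_permutation[OF assms(3,4)] by blast
  have "minor_mat F f g k = minor_mat F (f' \<circ> p) (g' \<circ> q) k"
    by (rule minor_mat_cong) (simp add: p q)
  hence "det (minor_mat F f g k) = signof p * (signof q * det (minor_mat F f' g' k))"
    by (simp add: det_minor_mat_permute_rows[OF p(1)] det_minor_mat_permute_cols[OF q(1)] mult_ac)
  moreover have abs_signof: "\<bar>signof \<pi> :: 'a\<bar> = 1" for \<pi> :: "nat \<Rightarrow> nat"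
    by (cases \<pi> rule: sign_cases) simp_all
  ultimately show ?thesis
    by (simp only: abs_mult abs_signof mult_1)
qed

lemma card_le_if_kernel_trivial:
  fixes M :: "nat \<Rightarrow> nat \<Rightarrow> 'a::field"
  assumes "finite R"
    and kernel: "\<And>x. \<forall>i\<in>R. (\<Sum>b<r. M i b * x b) = 0 \<Longrightarrow> \<forall>b<r. x b = 0"
  shows "r \<le> card R"
proof (rule ccontr)
  assume "\<not> r \<le> card R"
  then obtain y where y: "\<exists>b<r. y b \<noteq> 0" "\<forall>a<card R. (\<Sum>b<r. M (pick R a) b * y b) = 0"
    using exists_nonzero_solution_wide[of "card R" r "\<lambda>a b. M (pick R a) b"] by auto
  have "i \<in> pick R ` {..<card R}" if "i \<in> R" for i
    using that bij_betw_pick[OF assms(1) refl] by (simp add: bij_betw_def)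
  hence "\<forall>i\<in>R. (\<Sum>b<r. M i b * y b) = 0"
    using y(2) by blast
  thus False
    using kernel y(1) by blast
qed

text \<open>By minimality each row \<open>i\<close> has a vector \<open>x\<^sub>i\<close> killed by all other rows but not by \<open>i\<close>.
  More than \<open>r\<close> such vectors would be linearly dependent, and row \<open>i\<^sub>0\<close> applied to a
  dependence isolates the coefficient of \<open>x\<^sub>i\<^sub>0\<close>.\<close>
lemma card_le_if_kernel_trivial_minimal:
  fixes M :: "nat \<Rightarrow> nat \<Rightarrow> 'a::field"
  assumes "finite R"
    and kernel: "\<And>x. \<forall>i\<in>R. (\<Sum>b<r. M i b * x b) = 0 \<Longrightarrow> \<forall>b<r. x b = 0"
    and minimal: "\<And>i. i \<in> R \<Longrightarrow> \<exists>x. (\<forall>l\<in>R - {i}. (\<Sum>b<r. M l b * x b) = 0) \<and> (\<exists>b<r. x b \<noteq> 0)"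
  shows "card R \<le> r"
proof (rule ccontr)
  assume "\<not> card R \<le> r"
  define s where "s = card R"
  define f where "f = pick R"
  have f: "bij_betw f {..<s} R"
    unfolding f_def s_def by (rule bij_betw_pick[OF assms(1) refl])
  obtain x where x_others: "\<And>i l. i \<in> R \<Longrightarrow> l \<in> R - {i} \<Longrightarrow> (\<Sum>b<r. M l b * x i b) = 0"
    and x_nonzero: "\<And>i. i \<in> R \<Longrightarrow> \<exists>b<r. x i b \<noteq> 0"
    using minimal by metis
  have x_own: "(\<Sum>b<r. M i b * x i b) \<noteq> 0" if i: "i \<in> R" for i
    using kernel[of "x i"] x_others[OF i] x_nonzero[OF i] by blast
  obtain y where y: "\<exists>a<s. y a \<noteq> 0" "\<forall>b<r. (\<Sum>a<s. x (f a) b * y a) = 0"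
    using exists_nonzero_solution_wide[of r s "\<lambda>b a. x (f a) b"] \<open>\<not> card R \<le> r\<close>
    unfolding s_def by auto
  then obtain a0 where a0: "a0 < s" "y a0 \<noteq> 0"
    by blast
  have f_a0: "f a0 \<in> R"
    using f a0(1) by (auto simp: bij_betw_def)
  have "f a0 \<in> R - {f a}" if "a \<in> {..<s} - {a0}" for a
    using that f a0(1) f_a0 by (auto simp: bij_betw_def inj_on_def)
  hence "\<forall>a\<in>{..<s} - {a0}. y a * (\<Sum>b<r. M (f a0) b * x (f a) b) = 0"
    using x_others f by (auto simp: bij_betw_def)
  hence others: "(\<Sum>a\<in>{..<s} - {a0}. y a * (\<Sum>b<r. M (f a0) b * x (f a) b)) = 0"
    by (rule sum.neutral)
  have "0 = (\<Sum>b<r. M (f a0) b * (\<Sum>a<s. x (f a) b * y a))"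
    using y(2) by simp
  also have "\<dots> = (\<Sum>a<s. y a * (\<Sum>b<r. M (f a0) b * x (f a) b))"
    by (simp add: sum_distrib_left sum.swap[of _ "{..<r}"] mult_ac)
  also have "\<dots> = y a0 * (\<Sum>b<r. M (f a0) b * x (f a0) b)"
    using sum.remove[of "{..<s}" a0 "\<lambda>a. y a * (\<Sum>b<r. M (f a0) b * x (f a) b)"] a0(1) others
    by simp
  finally show False
    using a0(2) x_own[OF f_a0] by simp
qed

lemma exists_nonsingular_rows:
  fixes M :: "nat \<Rightarrow> nat \<Rightarrow> 'a::field"
  assumes kernel: "\<And>x. \<forall>i<m. (\<Sum>b<r. M i b * x b) = 0 \<Longrightarrow> \<forall>b<r. x b = 0"
  obtains I where "I \<subseteq> {..<m}" "card I = r" "det (minor_mat M (pick I) id r) \<noteq> 0"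
proof -
  define P where "P R \<longleftrightarrow> R \<subseteq> {..<m} \<and> (\<forall>x. (\<forall>i\<in>R. (\<Sum>b<r. M i b * x b) = 0) \<longrightarrow> (\<forall>b<r. x b = 0))"
    for R
  have "P {..<m}"
    using kernel unfolding P_def by auto
  then obtain R where "P R" and least: "\<And>R'. P R' \<Longrightarrow> card R \<le> card R'"
    using ex_has_least_nat[of P "{..<m}" card] by blast
  hence R: "R \<subseteq> {..<m}" "finite R"
    and kernel_R: "\<And>x. \<forall>i\<in>R. (\<Sum>b<r. M i b * x b) = 0 \<Longrightarrow> \<forall>b<r. x b = 0"
    unfolding P_def by (auto intro: finite_subset)
  have "\<exists>x. (\<forall>l\<in>R - {i}. (\<Sum>b<r. M l b * x b) = 0) \<and> (\<exists>b<r. x b \<noteq> 0)" if "i \<in> R" for i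
  proof -
    have "\<not> P (R - {i})"
      using least[of "R - {i}"] card_Diff1_less[OF R(2) that] by linarith
    thus ?thesis
      using R(1) unfolding P_def by blast
  qed
  hence card_R: "card R = r"
    using card_le_if_kernel_trivial[OF R(2) kernel_R]
      card_le_if_kernel_trivial_minimal[OF R(2) kernel_R] by (simp add: le_antisym)
  have "i \<in> pick R ` {..<r}" if "i \<in> R" for i
    using that bij_betw_pick[OF R(2) card_R] by (simp add: bij_betw_def)
  hence "\<forall>i\<in>R. (\<Sum>b<r. M i b * x b) = 0" if "\<forall>a<r. (\<Sum>b<r. M (pick R a) (id b) * x b) = 0" for x
    using that by auto
  hence "det (minor_mat M (pick R) id r) \<noteq> 0"
    unfolding det_minor_mat_nonzero_iff using kernel_R by blast
  thus thesis
    using that R(1) card_R by blast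
qed

lemma bij_betw_concat:
  fixes k l :: nat
  assumes f: "bij_betw f {..<k} P" and h: "bij_betw h {..<l} Q" and "P \<inter> Q = {}"
  shows "bij_betw (\<lambda>a. if a < k then f a else h (a - k)) {..<k + l} (P \<union> Q)"
proof -
  have "bij_betw (\<lambda>a. a - k) {k..<k + l} {..<l}"
    by (rule bij_betwI[of _ _ _ "\<lambda>a. a + k"]) auto
  hence "bij_betw (\<lambda>a. h (a - k)) {k..<k + l} Q"
    using bij_betw_trans[OF _ h] by (simp add: o_def)
  hence "bij_betw (\<lambda>a. if a \<in> {..<k} then f a else h (a - k)) ({..<k} \<union> {k..<k + l}) (P \<union> Q)"
    by (intro bij_betw_disjoint_Un[OF f]) (use assms(3) in auto)
  moreover have "{..<k} \<union> {k..<k + l} = {..<k + l}"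
    by auto
  ultimately show ?thesis
    by simp
qed

lemma det_minor_mat_zero_col:
  fixes F :: "nat \<Rightarrow> nat \<Rightarrow> 'a::comm_ring_1"
  assumes "t < k" and "\<And>i. i < k \<Longrightarrow> F (f i) (g t) = 0"
  shows "det (minor_mat F f g k) = 0"
proof -
  have "(\<Prod>i\<in>{0..<k}. minor_mat F f g k $$ (i, p i)) = 0" if p: "p permutes {0..<k}" for p
  proof (rule prod_zero)
    have "inv_into UNIV p t \<in> {0..<k}" "p (inv_into UNIV p t) = t"
      using p assms(1) permutes_in_image[OF permutes_inv[OF p]] permutes_inverses(1)[OF p] by auto
    thus "\<exists>a\<in>{0..<k}. minor_mat F f g k $$ (a, p a) = 0"
      using assms by (intro bexI[of _ "inv_into UNIV p t"]) auto
  qed simp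
  thus ?thesis
    unfolding det_def'[OF minor_mat_carrier] by (intro sum.neutral) auto
qed

lemma det_minor_mat_extend_by_unit_block:
  fixes D :: "nat \<Rightarrow> nat \<Rightarrow> 'a::idom"
  assumes zero: "\<And>i b. i < k \<Longrightarrow> b < m \<Longrightarrow> D (f i) (u b) = 0"
    and unit: "\<And>a b. a < m \<Longrightarrow> b < m \<Longrightarrow> D (h a) (u b) = (if a = b then 1 else 0)"
  shows "det (minor_mat D (\<lambda>a. if a < k then f a else h (a - k))
      (\<lambda>a. if a < k then g a else u (a - k)) (k + m)) = det (minor_mat D f g k)"
proof -
  define C where "C = mat m k (\<lambda>(a, t). D (h a) (g t))"
  have "minor_mat D (\<lambda>a. if a < k then f a else h (a - k)) (\<lambda>a. if a < k then g a else u (a - k)) (k + m)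
      = four_block_mat (minor_mat D f g k) (0\<^sub>m k m) C (1\<^sub>m m)"
    by (rule eq_matI) (auto simp: C_def zero unit)
  also have "det \<dots> = det (minor_mat D f g k) * det (1\<^sub>m m :: 'a mat)"
    by (rule det_four_block_mat_upper_right_zero) (auto simp: C_def)
  finally show ?thesis
    by simp
qed

lemma det_minor_mat_zero_if_foreign_unit_col:
  fixes D :: "nat \<Rightarrow> nat \<Rightarrow> 'a::comm_ring_1"
  assumes unit: "\<And>a b. a < r \<Longrightarrow> b < r \<Longrightarrow> D a (g b) = (if a = b then 1 else 0)"
    and K: "K \<subseteq> {..<r}" "card K = k" and L: "finite L" "card L = k"
    and b: "b < r" "b \<notin> K" "g b \<in> L"
  shows "det (minor_mat D (pick K) (pick L) k) = 0"
proof (rule det_minor_mat_zero_col)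
  define t where "t = card {a\<in>L. a < g b}"
  have "{a\<in>L. a < g b} \<subset> L"
    using b(3) by auto
  thus "t < k"
    unfolding t_def using psubset_card_mono[OF L(1)] L(2) by simp
  have "pick L t = g b"
    unfolding t_def by (rule pick_card_in_set[OF b(3)])
  moreover have "D (pick K i) (g b) = 0" if "i < k" for i
    using pick_in_subset[OF K(2) that] K(1) b unit[of "pick K i" b] by auto
  ultimately show "D (pick K i) (pick L t) = 0" if "i < k" for i
    using that by simp
qed

lemma det_minor_mat_extend_by_unit_cols:
  fixes D :: "nat \<Rightarrow> nat \<Rightarrow> 'a::idom"
  assumes unit: "\<And>a b. a < r \<Longrightarrow> b < r \<Longrightarrow> D a (g b) = (if a = b then 1 else 0)"
    and K: "K \<subseteq> {..<r}" "card K = k"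
  shows "det (minor_mat D (\<lambda>a. if a < k then pick K a else pick ({..<r} - K) (a - k))
      (\<lambda>a. if a < k then h a else g (pick ({..<r} - K) (a - k))) r) = det (minor_mat D (pick K) h k)"
proof -
  define Kc where "Kc = {..<r} - K"
  have Kc: "finite Kc" "card Kc = r - k" "K \<union> Kc = {..<r}" "K \<inter> Kc = {}"
    using K finite_subset[OF K(1)] by (auto simp: Kc_def card_Diff_subset)
  have "k + (r - k) = r"
    using K card_mono[of "{..<r}" K] by simp
  moreover have "det (minor_mat D (\<lambda>a. if a < k then pick K a else pick Kc (a - k))
      (\<lambda>a. if a < k then h a else g (pick Kc (a - k))) (k + (r - k))) = det (minor_mat D (pick K) h k)"
  proof (rule det_minor_mat_extend_by_unit_block)
    fix a b assume ab: "a < r - k" "b < r - k"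
    have "pick Kc a < r" "pick Kc b < r"
      using pick_in_subset[OF Kc(2) ab(1)] pick_in_subset[OF Kc(2) ab(2)] Kc(3) by auto
    moreover have "pick Kc a = pick Kc b \<longleftrightarrow> a = b"
      using bij_betw_pick[OF Kc(1,2)] ab by (auto simp: bij_betw_def inj_on_def)
    ultimately show "D (pick Kc a) (g (pick Kc b)) = (if a = b then 1 else 0)"
      by (simp add: unit)
  next
    fix i b assume ib: "i < k" "b < r - k"
    have "pick K i \<noteq> pick Kc b" "pick K i < r" "pick Kc b < r"
      using pick_in_subset[OF K(2) ib(1)] pick_in_subset[OF Kc(2) ib(2)] Kc(3,4) by auto
    thus "D (pick K i) (g (pick Kc b)) = 0"
      by (simp add: unit)
  qed
  ultimately show ?thesis
    unfolding Kc_def by simp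
qed

lemma abs_det_minor_mat_eq_maximal_minor:
  fixes D :: "nat \<Rightarrow> nat \<Rightarrow> 'a::linordered_idom"
  assumes g: "inj_on g {..<r}" "g ` {..<r} \<subseteq> {..<n}"
    and unit: "\<And>a b. a < r \<Longrightarrow> b < r \<Longrightarrow> D a (g b) = (if a = b then 1 else 0)"
    and K: "K \<subseteq> {..<r}" "card K = k" and L: "L \<subseteq> {..<n}" "card L = k"
    and no_foreign: "\<And>b. b < r \<Longrightarrow> b \<notin> K \<Longrightarrow> g b \<notin> L"
  obtains X where "X \<subseteq> {..<n}" "card X = r"
    "\<bar>det (minor_mat D (pick K) (pick L) k)\<bar> = \<bar>det (minor_mat D id (pick X) r)\<bar>"
proof -
  define Kc where "Kc = {..<r} - K"
  have fin: "finite K" "finite L" "finite Kc"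
    using K(1) L(1) finite_subset by (auto simp: Kc_def)
  have card_Kc: "card Kc = r - k" and r: "k + (r - k) = r"
    using K fin(1) card_mono[of "{..<r}" K] by (auto simp: Kc_def card_Diff_subset)
  define X where "X = L \<union> g ` Kc"
  have "bij_betw (g \<circ> pick Kc) {..<r - k} (g ` Kc)"
    using bij_betw_pick[OF fin(3) card_Kc] g(1) unfolding Kc_def
    by (meson Diff_subset bij_betw_trans inj_on_imp_bij_betw inj_on_subset)
  hence "bij_betw (\<lambda>a. g (pick Kc a)) {..<r - k} (g ` Kc)"
    by (simp add: o_def)
  moreover have "L \<inter> g ` Kc = {}"
    using no_foreign by (auto simp: Kc_def)
  ultimately have "bij_betw (\<lambda>a. if a < k then pick L a else g (pick Kc (a - k)))
      {..<k + (r - k)} (L \<union> g ` Kc)"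
    by (rule bij_betw_concat[OF bij_betw_pick[OF fin(2) L(2)]])
  hence cols: "bij_betw (\<lambda>a. if a < k then pick L a else g (pick Kc (a - k))) {..<r} X"
    using r by (simp add: X_def)
  have rows: "bij_betw (\<lambda>a. if a < k then pick K a else pick Kc (a - k)) {..<r} {..<r}"
    using bij_betw_concat[OF bij_betw_pick[OF fin(1) K(2)] bij_betw_pick[OF fin(3) card_Kc]] K(1) r
    by (simp add: Kc_def Un_absorb1)
  have X: "X \<subseteq> {..<n}" "finite X" "card X = r"
    using L(1) g(2) fin bij_betw_same_card[OF cols] by (auto simp: X_def Kc_def)
  have "\<bar>det (minor_mat D (pick K) (pick L) k)\<bar> = \<bar>det (minor_mat D
      (\<lambda>a. if a < k then pick K a else pick Kc (a - k))
      (\<lambda>a. if a < k then pick L a else g (pick Kc (a - k))) r)\<bar>"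
    using det_minor_mat_extend_by_unit_cols[of r D g K k "pick L", OF unit K] unfolding Kc_def
    by simp
  also have "\<dots> = \<bar>det (minor_mat D id (pick X) r)\<bar>"
    by (rule abs_det_minor_mat_reindex[OF rows _ cols bij_betw_pick[OF X(2,3)]]) simp
  finally show thesis
    using that X by blast
qed

text \<open>If a unit column outside the rows \<open>K\<close> is among the columns \<open>L\<close>, the minor has a zero column.
  Otherwise, adding the missing rows together with their unit columns gives a maximal minor
  with the same determinant up to sign.\<close>
lemma minor_with_unit_cols_zero_or_maximal:
  fixes D :: "nat \<Rightarrow> nat \<Rightarrow> 'a::linordered_idom"
  assumes g: "inj_on g {..<r}" "g ` {..<r} \<subseteq> {..<n}"
    and unit: "\<And>a b. a < r \<Longrightarrow> b < r \<Longrightarrow> D a (g b) = (if a = b then 1 else 0)"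
    and K: "K \<subseteq> {..<r}" "card K = k" and L: "L \<subseteq> {..<n}" "card L = k"
  shows "det (minor_mat D (pick K) (pick L) k) = 0 \<or>
    (\<exists>X \<subseteq> {..<n}. card X = r \<and>
      \<bar>det (minor_mat D (pick K) (pick L) k)\<bar> = \<bar>det (minor_mat D id (pick X) r)\<bar>)"
proof (cases "\<exists>b. b < r \<and> b \<notin> K \<and> g b \<in> L")
  case True
  have "finite L"
    using L(1) finite_subset by blast
  with True show ?thesis
    using det_minor_mat_zero_if_foreign_unit_col[of r D g, OF unit K _ L(2)] by blast
next
  case False
  then show ?thesis
    using abs_det_minor_mat_eq_maximal_minor[of g r n D, OF g unit K L] by blast
qed

abbreviation real_entry :: "int mat \<Rightarrow> nat \<Rightarrow> nat \<Rightarrow> real" where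
  "real_entry A i j \<equiv> real_of_int (A $$ (i, j))"

lemma det_minor_mat_real_entry:
  assumes "I \<subseteq> {..<dim_row A}" "X \<subseteq> {..<dim_col A}" "card I = k" "card X = k"
  shows "det (minor_mat (real_entry A) (pick I) (pick X) k) = real_of_int (det (submatrix A I X))"
proof -
  have "map_mat real_of_int (submatrix A I X) = minor_mat (real_entry A) (pick I) (pick X) k"
    by (simp add: submatrix_eq_minor_mat[OF assms] map_mat_minor_mat)
  moreover have "det (map_mat real_of_int (submatrix A I X)) = real_of_int (det (submatrix A I X))"
    by (rule of_int_hom.hom_det)
  ultimately show ?thesis
    by simp
qed

lemma finite_cols_indep_real: "finite {S. cols_indep_real A S}"
  by (rule finite_subset[of _ "Pow {..<dim_col A}"]) (auto simp: cols_indep_real_def)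

lemma card_le_real_rank: "cols_indep_real A S \<Longrightarrow> card S \<le> real_rank A"
  unfolding real_rank_def using finite_cols_indep_real[of A] by (intro Max_ge) auto

lemma real_rank_attained:
  obtains S where "cols_indep_real A S" "card S = real_rank A"
proof -
  have "cols_indep_real A {}"
    by (simp add: cols_indep_real_def)
  hence "real_rank A \<in> card ` {S. cols_indep_real A S}"
    unfolding real_rank_def using finite_cols_indep_real[of A] by (intro Max_in) auto
  thus thesis
    using that by auto
qed

lemma cols_indep_real_kernel_trivial:
  assumes "cols_indep_real A J" "card J = r"
    and "\<forall>i<dim_row A. (\<Sum>b<r. real_entry A i (pick J b) * x b) = 0"
  shows "\<forall>b<r. x b = 0"
proof (intro allI impI)
  fix b assume b: "b < r"
  have J: "finite J" "J \<subseteq> {..<dim_col A}"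
    using assms(1) finite_subset by (auto simp: cols_indep_real_def)
  define c where "c j = x (card {a\<in>J. a < j})" for j
  have c_pick: "c (pick J a) = x a" if "a < r" for a
    unfolding c_def using card_pick[of a J] that assms(2) by simp
  have "(\<Sum>j\<in>J. c j * real_entry A i j) = 0" if "i < dim_row A" for i
    using assms(3) that by (simp add: sum_pick[OF J(1) assms(2)] c_pick mult.commute)
  hence "\<forall>j\<in>J. c j = 0"
    using assms(1) unfolding cols_indep_real_def by blast
  thus "x b = 0"
    using c_pick[OF b] pick_in_subset[OF assms(2) b] by simp
qed

lemma exists_nonsingular_rank_minor:
  obtains I J where "I \<subseteq> {..<dim_row A}" "J \<subseteq> {..<dim_col A}" "card I = real_rank A"
    "card J = real_rank A" "det (submatrix A I J) \<noteq> 0"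
proof -
  obtain J where J: "cols_indep_real A J" "card J = real_rank A"
    using real_rank_attained by blast
  obtain I where I: "I \<subseteq> {..<dim_row A}" "card I = real_rank A"
    "det (minor_mat (\<lambda>i b. real_entry A i (pick J b)) (pick I) id (real_rank A)) \<noteq> 0"
    by (rule exists_nonsingular_rows[OF cols_indep_real_kernel_trivial[OF J]])
  have "minor_mat (\<lambda>i b. real_entry A i (pick J b)) (pick I) id (real_rank A) =
      minor_mat (real_entry A) (pick I) (pick J) (real_rank A)"
    by (rule minor_mat_cong) simp
  moreover have "J \<subseteq> {..<dim_col A}"
    using J(1) by (simp add: cols_indep_real_def)
  ultimately show thesis
    using that I J det_minor_mat_real_entry[of I A J "real_rank A"] by simp
qed

text \<open>The coordinates of column \<open>j\<close> of \<open>A\<close> in the basis formed by the columns \<open>J\<close>; they are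
  arbitrary if column \<open>j\<close> is not in the span of these columns.\<close>
definition basis_coord :: "int mat \<Rightarrow> nat set \<Rightarrow> nat \<Rightarrow> nat \<Rightarrow> real" where
  "basis_coord A J b j = (SOME l. \<forall>i<dim_row A.
      real_entry A i j = (\<Sum>c<card J. l c * real_entry A i (pick J c))) b"

definition basis_coord_mat :: "int mat \<Rightarrow> nat set \<Rightarrow> int mat" where
  "basis_coord_mat A J = mat (card J) (dim_col A) (\<lambda>(b, j). round (basis_coord A J b j))"

locale nonsingular_rank_minor =
  fixes A :: "int mat" and I J :: "nat set"
  assumes rows: "I \<subseteq> {..<dim_row A}" and cols: "J \<subseteq> {..<dim_col A}"
    and card_rows: "card I = real_rank A" and card_cols: "card J = real_rank A"
    and nonsingular: "det (submatrix A I J) \<noteq> 0"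
begin

abbreviation r :: nat where "r \<equiv> real_rank A"

lemma finite_cols: "finite J"
  using cols finite_subset by blast

lemma pick_rows_lt: "a < r \<Longrightarrow> pick I a < dim_row A"
  using pick_in_subset[OF card_rows] rows by auto

lemma pick_cols_lt: "a < r \<Longrightarrow> pick J a < dim_col A"
  using pick_in_subset[OF card_cols] cols by auto

lemma col_in_basis_iff: "j \<in> J \<longleftrightarrow> (\<exists>b<r. j = pick J b)"
  using bij_betw_pick[OF finite_cols card_cols] by (auto simp: bij_betw_def)

lemma basis_rows_kernel_trivial:
  assumes "\<And>a. a < r \<Longrightarrow> (\<Sum>c<r. real_entry A (pick I a) (pick J c) * x c) = 0" and "c < r"
  shows "x c = 0"
proof -
  have "det (minor_mat (real_entry A) (pick I) (pick J) r) \<noteq> 0"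
    using nonsingular det_minor_mat_real_entry[OF rows cols card_rows card_cols] by simp
  thus ?thesis
    using assms unfolding det_minor_mat_nonzero_iff by blast
qed

lemma cols_indep_real_basis: "cols_indep_real A J"
  unfolding cols_indep_real_def
proof (intro conjI allI impI ballI)
  fix x j assume x: "\<forall>i<dim_row A. (\<Sum>j\<in>J. x j * real_entry A i j) = 0" and "j \<in> J"
  then obtain b where b: "b < r" "j = pick J b"
    using col_in_basis_iff by blast
  have "(\<Sum>c<r. real_entry A (pick I a) (pick J c) * x (pick J c)) = 0" if "a < r" for a
    using x pick_rows_lt[OF that] by (simp add: sum_pick[OF finite_cols card_cols] mult.commute)
  thus "x j = 0"
    using basis_rows_kernel_trivial[of "\<lambda>c. x (pick J c)", OF _ b(1)] b(2) by simp
qed (rule cols)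

lemma basis_spans_col:
  assumes "j < dim_col A"
  shows "\<exists>l. \<forall>i<dim_row A. real_entry A i j = (\<Sum>c<card J. l c * real_entry A i (pick J c))"
proof (cases "j \<in> J")
  case True
  then obtain b where b: "b < r" "j = pick J b"
    using col_in_basis_iff by blast
  have "real_entry A i j = (\<Sum>c<card J. (if c = b then 1 else 0) * real_entry A i (pick J c))" for i
    using b card_cols by (simp add: if_distrib[of "\<lambda>x. x * _"] sum.delta cong: if_cong)
  thus ?thesis
    by (intro exI[of _ "\<lambda>c. if c = b then 1 else 0"]) blast
next
  case False
  have "card (insert j J) = r + 1"
    using False finite_cols card_cols by simp
  hence "\<not> cols_indep_real A (insert j J)"
    using card_le_real_rank[of A "insert j J"] by linarith
  moreover have "insert j J \<subseteq> {..<dim_col A}"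
    using assms cols by auto
  ultimately obtain x where x: "\<forall>i<dim_row A. x j * real_entry A i j + (\<Sum>j'\<in>J. x j' * real_entry A i j') = 0"
    and nonzero: "\<not> (\<forall>j'\<in>insert j J. x j' = 0)"
    using False finite_cols unfolding cols_indep_real_def by auto
  have "x j \<noteq> 0"
  proof
    assume "x j = 0"
    hence "\<forall>j'\<in>J. x j' = 0"
      using x cols_indep_real_basis unfolding cols_indep_real_def by simp
    thus False
      using nonzero \<open>x j = 0\<close> by simp
  qed
  hence "real_entry A i j = (\<Sum>c<card J. (- x (pick J c) / x j) * real_entry A i (pick J c))"
    if "i < dim_row A" for i
    using x that sum_pick[OF finite_cols refl, of "\<lambda>j'. x j' * real_entry A i j'"]
    by (simp add: sum_divide_distrib[symmetric] sum_negf field_simps add_eq_0_iff2)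
  thus ?thesis
    by (intro exI[of _ "\<lambda>c. - x (pick J c) / x j"]) blast
qed

lemma col_eq_basis_comb:
  assumes "j < dim_col A" "i < dim_row A"
  shows "real_entry A i j = (\<Sum>c<r. basis_coord A J c j * real_entry A i (pick J c))"
  using someI_ex[OF basis_spans_col[OF assms(1)]] assms(2) card_cols
  unfolding basis_coord_def by simp

lemma basis_comb_unique:
  assumes "\<And>i. i < dim_row A \<Longrightarrow>
      (\<Sum>c<r. l c * real_entry A i (pick J c)) = (\<Sum>c<r. l' c * real_entry A i (pick J c))"
    and "c < r"
  shows "l c = l' c"
proof -
  have "(\<Sum>c<r. real_entry A (pick I a) (pick J c) * (l c - l' c)) = 0" if "a < r" for a
    using assms(1)[OF pick_rows_lt[OF that]] by (simp add: sum_subtractf algebra_simps)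
  thus ?thesis
    using basis_rows_kernel_trivial[of "\<lambda>c. l c - l' c", OF _ assms(2)] by simp
qed

lemma basis_coord_basis_col:
  assumes "a < r" "b < r"
  shows "basis_coord A J a (pick J b) = (if a = b then 1 else 0)"
proof (rule basis_comb_unique[OF _ assms(1)])
  fix i assume "i < dim_row A"
  thus "(\<Sum>c<r. basis_coord A J c (pick J b) * real_entry A i (pick J c)) =
      (\<Sum>c<r. (if c = b then 1 else 0) * real_entry A i (pick J c))"
    using col_eq_basis_comb[OF pick_cols_lt[OF assms(2)]] assms(2)
    by (simp add: if_distrib[of "\<lambda>x. x * _"] sum.delta cong: if_cong)
qed

lemma det_minor_mat_factor:
  assumes "\<And>t. t < r \<Longrightarrow> h t < dim_col A"
  shows "det (minor_mat (real_entry A) (pick I) h r) =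
    det (minor_mat (real_entry A) (pick I) (pick J) r) * det (minor_mat (basis_coord A J) id h r)"
proof -
  have "minor_mat (real_entry A) (pick I) h r =
      minor_mat (real_entry A) (pick I) (pick J) r * minor_mat (basis_coord A J) id h r"
    (is "?M = ?B * ?C")
  proof (rule eq_matI)
    fix a t assume "a < dim_row (?B * ?C)" "t < dim_col (?B * ?C)"
    hence "a < r" "t < r"
      by auto
    thus "?M $$ (a, t) = (?B * ?C) $$ (a, t)"
      using col_eq_basis_comb[OF assms pick_rows_lt]
      by (simp add: scalar_prod_def atLeast0LessThan mult.commute)
  qed auto
  thus ?thesis
    by (simp add: det_mult[of _ r])
qed

lemma basis_coord_minor_zero_or_maximal:
  assumes "K \<subseteq> {..<r}" "card K = k" "L \<subseteq> {..<dim_col A}" "card L = k"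
  shows "det (minor_mat (basis_coord A J) (pick K) (pick L) k) = 0 \<or>
    (\<exists>X \<subseteq> {..<dim_col A}. card X = r \<and>
      \<bar>det (minor_mat (basis_coord A J) (pick K) (pick L) k)\<bar> =
      \<bar>det (minor_mat (basis_coord A J) id (pick X) r)\<bar>)"
proof -
  have "inj_on (pick J) {..<r}" "pick J ` {..<r} \<subseteq> {..<dim_col A}"
    using bij_betw_pick[OF finite_cols card_cols] cols by (auto simp: bij_betw_def)
  from minor_with_unit_cols_zero_or_maximal[OF this, of "basis_coord A J", OF basis_coord_basis_col assms]
  show ?thesis .
qed

lemma col_comb_zero_iff_coord_comb_zero:
  assumes "S \<subseteq> {..<dim_col A}"
  shows "(\<forall>i<dim_row A. (\<Sum>j\<in>S. x j * real_entry A i j) = 0) \<longleftrightarrow>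
    (\<forall>b<r. (\<Sum>j\<in>S. x j * basis_coord A J b j) = 0)"
proof -
  have comb: "(\<Sum>j\<in>S. x j * real_entry A i j) =
      (\<Sum>b<r. real_entry A i (pick J b) * (\<Sum>j\<in>S. x j * basis_coord A J b j))"
    if "i < dim_row A" for i
  proof -
    have "(\<Sum>j\<in>S. x j * real_entry A i j) =
        (\<Sum>j\<in>S. x j * (\<Sum>b<r. basis_coord A J b j * real_entry A i (pick J b)))"
      using assms that col_eq_basis_comb by (intro sum.cong) auto
    thus ?thesis
      by (simp add: sum_distrib_left sum.swap[of _ S] mult_ac)
  qed
  show ?thesis
  proof
    assume "\<forall>i<dim_row A. (\<Sum>j\<in>S. x j * real_entry A i j) = 0"
    thus "\<forall>b<r. (\<Sum>j\<in>S. x j * basis_coord A J b j) = 0"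
      using basis_rows_kernel_trivial[of "\<lambda>b. \<Sum>j\<in>S. x j * basis_coord A J b j"]
        comb pick_rows_lt by simp
  qed (simp add: comb)
qed

end

locale bounded_ratio_minor = nonsingular_rank_minor +
  fixes \<Delta> :: int
  assumes ratio_bounded: "\<And>X. X \<subseteq> {..<dim_col A} \<Longrightarrow> card X = real_rank A \<Longrightarrow>
      \<exists>z. \<bar>z\<bar> \<le> \<Delta> \<and> det (submatrix A I X) = z * det (submatrix A I J)"
begin

lemma Delta_nonneg: "0 \<le> \<Delta>"
  using ratio_bounded[OF cols card_cols] by force

lemma det_basis_coord_max_minor:
  assumes X: "X \<subseteq> {..<dim_col A}" "card X = r"
  obtains z :: int where "\<bar>z\<bar> \<le> \<Delta>" "det (minor_mat (basis_coord A J) id (pick X) r) = of_int z"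
proof -
  obtain z where z: "\<bar>z\<bar> \<le> \<Delta>" "det (submatrix A I X) = z * det (submatrix A I J)"
    using ratio_bounded[OF X] by blast
  have "pick X t < dim_col A" if "t < r" for t
    using pick_in_subset[OF X(2) that] X(1) by auto
  hence "real_of_int (det (submatrix A I X)) =
      real_of_int (det (submatrix A I J)) * det (minor_mat (basis_coord A J) id (pick X) r)"
    using det_minor_mat_factor det_minor_mat_real_entry[OF rows X(1) card_rows X(2)]
      det_minor_mat_real_entry[OF rows cols card_rows card_cols] by simp
  hence "det (minor_mat (basis_coord A J) id (pick X) r) = of_int z"
    using z(2) nonsingular by simp
  thus thesis
    using that z(1) by blast
qed

lemma det_basis_coord_minor:
  assumes "K \<subseteq> {..<r}" "card K = k" "L \<subseteq> {..<dim_col A}" "card L = k"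
  obtains z :: int where "\<bar>z\<bar> \<le> \<Delta>" "det (minor_mat (basis_coord A J) (pick K) (pick L) k) = of_int z"
  using basis_coord_minor_zero_or_maximal[OF assms]
proof
  assume "det (minor_mat (basis_coord A J) (pick K) (pick L) k) = 0"
  thus thesis
    using that[of 0] Delta_nonneg by simp
next
  assume "\<exists>X \<subseteq> {..<dim_col A}. card X = r \<and>
    \<bar>det (minor_mat (basis_coord A J) (pick K) (pick L) k)\<bar> = \<bar>det (minor_mat (basis_coord A J) id (pick X) r)\<bar>"
  then obtain X z where "\<bar>z\<bar> \<le> \<Delta>"
    "\<bar>det (minor_mat (basis_coord A J) (pick K) (pick L) k)\<bar> = \<bar>of_int z\<bar>"
    using det_basis_coord_max_minor by metis
  thus thesis
    using that[of z] that[of "- z"] by (auto simp: abs_eq_iff)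
qed

lemma basis_coord_integral:
  assumes "b < r" "j < dim_col A"
  shows "basis_coord A J b j = of_int (round (basis_coord A J b j))"
proof -
  have "pick {b} 0 = b" "pick {j} 0 = j"
    by (simp_all add: Least_equality)
  hence "det (minor_mat (basis_coord A J) (pick {b}) (pick {j}) 1) = basis_coord A J b j"
    by (simp add: det_single)
  moreover obtain z :: int where "det (minor_mat (basis_coord A J) (pick {b}) (pick {j}) 1) = of_int z"
    using det_basis_coord_minor[of "{b}" 1 "{j}"] assms by auto
  ultimately show ?thesis
    by simp
qed

lemma dim_basis_coord_mat [simp]:
  "dim_row (basis_coord_mat A J) = r" "dim_col (basis_coord_mat A J) = dim_col A"
  using card_cols by (simp_all add: basis_coord_mat_def)

lemma real_entry_basis_coord_mat:
  "b < r \<Longrightarrow> j < dim_col A \<Longrightarrow> real_entry (basis_coord_mat A J) b j = basis_coord A J b j"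
  using basis_coord_integral card_cols by (simp add: basis_coord_mat_def)

lemma totally_Delta_modular_basis_coord_mat: "totally_Delta_modular \<Delta> (basis_coord_mat A J)"
  unfolding totally_Delta_modular_def
proof (intro allI ballI)
  fix k KL assume "KL \<in> square_subsets (basis_coord_mat A J) k"
  then obtain K L where KL: "KL = (K, L)" and K: "K \<subseteq> {..<r}" "card K = k"
    and L: "L \<subseteq> {..<dim_col A}" "card L = k"
    unfolding square_subsets_def by auto
  obtain z :: int where z: "\<bar>z\<bar> \<le> \<Delta>" "det (minor_mat (basis_coord A J) (pick K) (pick L) k) = of_int z"
    using det_basis_coord_minor[OF K L] by blast
  have "minor_mat (real_entry (basis_coord_mat A J)) (pick K) (pick L) k =
      minor_mat (basis_coord A J) (pick K) (pick L) k"
    using pick_in_subset[OF K(2)] pick_in_subset[OF L(2)] K L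
    by (intro minor_mat_cong real_entry_basis_coord_mat) auto
  hence "det (submatrix (basis_coord_mat A J) K L) = z"
    using det_minor_mat_real_entry[of K "basis_coord_mat A J" L k] K L z(2) by simp
  thus "case KL of (K, L) \<Rightarrow> \<bar>det (submatrix (basis_coord_mat A J) K L)\<bar> \<le> \<Delta>"
    using KL z(1) by simp
qed

lemma cols_indep_real_basis_coord_mat_iff:
  "cols_indep_real (basis_coord_mat A J) S \<longleftrightarrow> cols_indep_real A S"
proof (cases "S \<subseteq> {..<dim_col A}")
  case True
  have "(\<Sum>j\<in>S. x j * real_entry (basis_coord_mat A J) b j) = (\<Sum>j\<in>S. x j * basis_coord A J b j)"
    if "b < r" for b x
    using True that by (intro sum.cong) (auto simp: real_entry_basis_coord_mat)
  thus ?thesis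
    using col_comb_zero_iff_coord_comb_zero[OF True] True by (simp add: cols_indep_real_def)
qed (simp add: cols_indep_real_def)

end

text \<open>This is the only place where \<open>\<Delta> = 2\<close> matters: a maximal minor of minimal nonzero absolute
  value divides every other maximal minor with a quotient of absolute value at most \<open>2\<close>,
  which fails for \<open>\<Delta> \<ge> 3\<close> (e.g. \<open>3 / 2\<close>).\<close>
lemma bounded_quotient_2:
  fixes b w :: int
  assumes "\<bar>b\<bar> \<le> 2" "b \<noteq> 0" "\<bar>w\<bar> \<le> 2" "w = 0 \<or> \<bar>b\<bar> \<le> \<bar>w\<bar>"
  shows "\<exists>z. \<bar>z\<bar> \<le> 2 \<and> w = z * b"
proof -
  have "b \<in> {-2, -1, 1, 2}" "w \<in> {-2, -1, 0, 1, 2}"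
    using assms(1-3) by auto
  thus ?thesis
    using assms(4) by (intro exI[of _ "if \<bar>b\<bar> = 1 then w * b else w div b"]) auto
qed

lemma exists_nonsingular_rank_minor_least_abs_det:
  obtains I J where "nonsingular_rank_minor A I J"
    "\<And>I' X. nonsingular_rank_minor A I' X \<Longrightarrow> \<bar>det (submatrix A I J)\<bar> \<le> \<bar>det (submatrix A I' X)\<bar>"
proof -
  obtain I0 J0 where "nonsingular_rank_minor A I0 J0"
    using exists_nonsingular_rank_minor[of A] by (metis nonsingular_rank_minor.intro)
  then obtain IJ where "nonsingular_rank_minor A (fst IJ) (snd IJ)" and least:
    "\<And>IJ'. nonsingular_rank_minor A (fst IJ') (snd IJ') \<Longrightarrow>
      nat \<bar>det (submatrix A (fst IJ) (snd IJ))\<bar> \<le> nat \<bar>det (submatrix A (fst IJ') (snd IJ'))\<bar>"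
    using ex_has_least_nat[of "\<lambda>IJ. nonsingular_rank_minor A (fst IJ) (snd IJ)" "(I0, J0)"
        "\<lambda>IJ. nat \<bar>det (submatrix A (fst IJ) (snd IJ))\<bar>"] by auto
  moreover have "\<bar>det (submatrix A (fst IJ) (snd IJ))\<bar> \<le> \<bar>det (submatrix A I' X)\<bar>"
    if "nonsingular_rank_minor A I' X" for I' X
    using least[of "(I', X)"] that by simp
  ultimately show thesis
    using that by blast
qed

lemma Delta_modular_2_bounded_ratio_minor:
  assumes "Delta_modular 2 A"
  obtains I J where "bounded_ratio_minor A I J 2"
proof -
  obtain I J where IJ: "nonsingular_rank_minor A I J" and least:
    "\<And>I' X. nonsingular_rank_minor A I' X \<Longrightarrow> \<bar>det (submatrix A I J)\<bar> \<le> \<bar>det (submatrix A I' X)\<bar>"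
    using exists_nonsingular_rank_minor_least_abs_det by blast
  interpret nonsingular_rank_minor A I J
    by (rule IJ)
  have bounded: "\<bar>det (submatrix A I X)\<bar> \<le> 2" if "X \<subseteq> {..<dim_col A}" "card X = r" for X
    using assms that rows card_rows unfolding Delta_modular_def square_subsets_def by auto
  have ratio: "\<exists>z. \<bar>z\<bar> \<le> 2 \<and> det (submatrix A I X) = z * det (submatrix A I J)"
    if X: "X \<subseteq> {..<dim_col A}" "card X = r" for X
  proof (rule bounded_quotient_2[OF bounded[OF cols card_cols] nonsingular bounded[OF X]])
    show "det (submatrix A I X) = 0 \<or> \<bar>det (submatrix A I J)\<bar> \<le> \<bar>det (submatrix A I X)\<bar>"
      using least[of I X] rows X card_rows by (auto intro: nonsingular_rank_minor.intro)
  qed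
  have "bounded_ratio_minor A I J 2"
    using IJ ratio by (simp add: bounded_ratio_minor_def bounded_ratio_minor_axioms_def)
  thus thesis
    by (rule that)
qed

lemma Delta_modular_2_imp_totally_modular_same_matroid:
  assumes "Delta_modular 2 A"
  obtains D where "totally_Delta_modular 2 D" "dim_col D = dim_col A"
    "\<And>S. cols_indep_real D S \<longleftrightarrow> cols_indep_real A S"
proof -
  obtain I J where "bounded_ratio_minor A I J 2"
    using Delta_modular_2_bounded_ratio_minor[OF assms] by blast
  then interpret bounded_ratio_minor A I J 2 .
  show thesis
    using that totally_Delta_modular_basis_coord_mat cols_indep_real_basis_coord_mat_iff by simp
qed

lemma totally_Delta_modular_imp_Delta_modular: "totally_Delta_modular \<Delta> A \<Longrightarrow> Delta_modular \<Delta> A"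
  unfolding totally_Delta_modular_def Delta_modular_def by blast

lemma iso_vector_matroid_transfer:
  assumes "iso_vector_matroid E indep A" "dim_col D = dim_col A"
    "\<And>S. cols_indep_real D S \<longleftrightarrow> cols_indep_real A S"
  shows "iso_vector_matroid E indep D"
  using assms unfolding iso_vector_matroid_def by simp

theorem mainTheorem8:
  fixes E :: "'a set" and indep :: "'a set \<Rightarrow> bool"
  shows "in_Mbar 2 E indep \<longleftrightarrow> in_M 2 E indep"
proof
  assume "in_Mbar 2 E indep"
  thus "in_M 2 E indep"
    unfolding in_Mbar_def in_M_def using totally_Delta_modular_imp_Delta_modular by blast
next
  assume "in_M 2 E indep"
  then obtain A where A: "Delta_modular 2 A" "iso_vector_matroid E indep A"
    unfolding in_M_def by blast
  obtain D where "totally_Delta_modular 2 D" "dim_col D = dim_col A"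
    "\<And>S. cols_indep_real D S \<longleftrightarrow> cols_indep_real A S"
    using Delta_modular_2_imp_totally_modular_same_matroid[OF A(1)] by blast
  thus "in_Mbar 2 E indep"
    unfolding in_Mbar_def using iso_vector_matroid_transfer[OF A(2)] by blast
qed

end
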